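(* Assume $(H_S(BS))$, let $\mathbf m_\lambda:(0,1]\to\mathbb{N}$ satisfy $\mathbf m_\lambda\to\infty$ as $\lambda\to0$, and let $(N^S_t(i))_{t\ge0,i\in\mathbb{Z}}$ be i.i.d. $SR(\mu_S)$-processes. (i) With $K^\lambda_t=(2\mathbf m_\lambda+1)^{-1}\#\{i\in\{-\mathbf m_\lambda,\dots,\mathbf m_\lambda\}:N^S_{T_St}(i)>0\}$ and $U^\lambda_t=(\psi_S(K^\lambda_t)/T_S)\wedge1$, for every $T>0$, $\sup_{t\in[0,T]}|U^\lambda_t-t\wedge1|\to0$ almost surely as $\lambda\to0$. (ii) For every $t\ge0$ and $k\ge0$, $\Pr[|C(\min(N^S_{T_St},1),0)|=k]=q_k(t\wedge1)$, where $q_0(z)=\nu_S((zT_S,T_S))$ and $q_k(z)=k[\nu_S((zT_S,T_S))]^2[\nu_S((0,zT_S))]^k$ for $k\ge1$, $z\in[0,1]$.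
   Context: $(H_S(BS))$: $\mu_S$ is a probability measure on $(0,\infty)$ with bounded support and mean $m_S$; $T_S=\max\operatorname{supp}\mu_S$; $\nu_S(dt)=m_S^{-1}\mu_S((t,\infty))dt$ (support $[0,T_S]$). $\psi_S:(0,1)\to(0,T_S)$ is the inverse of $t\mapsto\nu_S((0,t))$, extended by $\psi_S(0)=0$, $\psi_S(1)=T_S$. A $SR(\mu)$-process: $N_t=\#\{k\ge1:T_k\le t\}$ with $T_1\sim\nu_\mu(dt)=m_\mu^{-1}\mu((t,\infty))dt$, $T_{k+1}=T_k+X_k$, $(X_k)$ i.i.d. with law $\mu$ independent of $T_1$. $C(\eta,i)$ is $\emptyset$ if $\eta(i)=0$, otherwise the maximal block of consecutive integers containing $i$ where $\eta\equiv1$; $|\cdot|$ is cardinality (infinite allowed). *)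

theory Defs
  imports "HOL-Probability.Probability"
begin

definition mean_S :: "real measure \<Rightarrow> real" where
  "mean_S mu = integral\<^sup>L mu (\<lambda>x. x)"

definition supp_S :: "real measure \<Rightarrow> real set" where
  "supp_S mu = {x. \<forall>e>0. emeasure mu (ball x e) > 0}"

definition T_S :: "real measure \<Rightarrow> real" where
  "T_S mu = Sup (supp_S mu)"

definition nu_S :: "real measure \<Rightarrow> real measure" where
  "nu_S mu = density lborel
     (\<lambda>t. indicator {0<..} t * ennreal (measure mu {t<..} / mean_S mu))"

definition psi_S :: "real measure \<Rightarrow> real \<Rightarrow> real" where
  "psi_S mu z =
     (if z \<le> 0 then 0
      else if z \<ge> 1 then T_S mu
      else (THE t. t \<in> {0<..<T_S mu} \<and> measure (nu_S mu) {0<..<t} = z))"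

text \<open>Counting process of a stationary renewal process built from
  Z 0 = T_1 and Z (Suc k) = X_(k+1): T_k = Z 0 + ... + Z (k-1).
  N_t = #{k \<ge> 1. T_k \<le> t}, possibly infinite.\<close>
definition sr_count :: "(nat \<Rightarrow> real) \<Rightarrow> real \<Rightarrow> enat" where
  "sr_count Z t =
     (let S = {k::nat. 1 \<le> k \<and> (\<Sum>j<k. Z j) \<le> t}
      in if finite S then enat (card S) else \<infinity>)"

definition Cblock :: "(int \<Rightarrow> 'b::{zero,one}) \<Rightarrow> int \<Rightarrow> int set" where
  "Cblock eta i =
     (if eta i = 0 then {}
      else {j. \<forall>l. min i j \<le> l \<and> l \<le> max i j \<longrightarrow> eta l = 1})"

definition q_S :: "real measure \<Rightarrow> nat \<Rightarrow> real \<Rightarrow> real" where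
  "q_S mu k z =
     (if k = 0 then measure (nu_S mu) {z * T_S mu<..<T_S mu}
      else real k * (measure (nu_S mu) {z * T_S mu<..<T_S mu})^2
                  * (measure (nu_S mu) {0<..<z * T_S mu})^k)"

end

theory Submission
  imports Defs
begin

(*
  Write T_1(i) = Z i 0 for the first renewal time of the i-th process.  Since all
  later increments are positive almost surely, the i-th process has at least one
  renewal by time s iff T_1(i) <= s; all statements reduce to the i.i.d. family
  (T_1(i)), whose common law nu_S has a continuous distribution function F that
  increases strictly from F 0 = 0 to F T_S = 1, so that psi_S is its inverse.

  (i)  The fraction K of active sites is the empirical distribution function of
       2m+1 samples of T_1 at time T_S t.  Hoeffding's inequality and Borel-Cantelli
       give almost sure convergence at every point of a countable grid, monotonicity
       and continuity of F upgrade this to uniform convergence (Polya), and uniform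
       continuity of psi_S on [0,1] transfers it to psi_S(K)/T_S, since
       psi_S (F (T_S t)) / T_S = min t 1.
  (ii) The block of active sites around 0 has size k >= 1 iff it is a run of k active
       sites starting at some a in {1-k..0} framed by two inactive sites.  These k
       events are disjoint and by independence each has probability p^k (1-p)^2 with
       p = F (T_S t) = nu_S((0, min t 1 * T_S)).
*)

section \<open>Renewal counts and blocks of ones\<close>

definition arrived :: "(nat \<Rightarrow> real) \<Rightarrow> real \<Rightarrow> bool" where
  "arrived Y s \<longleftrightarrow> (\<exists>n\<ge>1. (\<Sum>j<n. Y j) \<le> s)"

lemma sr_count_pos_iff: "sr_count Y s > 0 \<longleftrightarrow> arrived Y s"
proof -
  define S where "S = {k::nat. 1 \<le> k \<and> (\<Sum>j<k. Y j) \<le> s}"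
  have "sr_count Y s = (if finite S then enat (card S) else \<infinity>)"
    by (simp add: sr_count_def S_def Let_def)
  then have "sr_count Y s > 0 \<longleftrightarrow> S \<noteq> {}"
    by (cases "finite S") (auto simp: zero_enat_def card_gt_0_iff)
  then show ?thesis by (auto simp: S_def arrived_def)
qed

lemma sr_count_min_1: "min (sr_count Y s) 1 = (if arrived Y s then 1 else 0)"
proof (cases "sr_count Y s > 0")
  case True
  then have "sr_count Y s \<ge> 1"
    by (metis Suc_ile_eq one_eSuc zero_less_iff_neq_zero ileI1 eSuc_enat zero_enat_def)
  then show ?thesis using True sr_count_pos_iff[of Y s] by (simp add: min_def)
next
  case False
  then show ?thesis using sr_count_pos_iff[of Y s] by (simp add: min_def)
qed

lemma arrived_iff_first:
  fixes Y :: "nat \<Rightarrow> real"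
  assumes "\<And>k. Y (Suc k) \<ge> 0"
  shows "arrived Y s \<longleftrightarrow> Y 0 \<le> s"
proof
  assume "arrived Y s"
  then obtain n where "1 \<le> n" "(\<Sum>j<n. Y j) \<le> s" unfolding arrived_def by blast
  then obtain m where m: "(\<Sum>j<Suc m. Y j) \<le> s" by (cases n) auto
  have "(\<Sum>j<Suc m. Y j) = Y 0 + (\<Sum>j<m. Y (Suc j))" by (rule sum.lessThan_Suc_shift)
  moreover have "(\<Sum>j<m. Y (Suc j)) \<ge> 0" by (intro sum_nonneg assms)
  ultimately show "Y 0 \<le> s" using m by linarith
next
  assume "Y 0 \<le> s"
  then show "arrived Y s" unfolding arrived_def by (intro exI[of _ 1]) simp
qed

definition block0 :: "(int \<Rightarrow> bool) \<Rightarrow> int set" where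
  "block0 q = {j. \<forall>l. min 0 j \<le> l \<and> l \<le> max 0 j \<longrightarrow> q l}"

lemma Cblock_indicator:
  "Cblock (\<lambda>i. if q i then (1::enat) else 0) 0 = (if q 0 then block0 q else {})"
  by (auto simp: Cblock_def block0_def)

definition run :: "(int \<Rightarrow> bool) \<Rightarrow> nat \<Rightarrow> int \<Rightarrow> bool" where
  "run q k a \<longleftrightarrow> \<not> q (a - 1) \<and> (\<forall>l\<in>{a..a + int k - 1}. q l) \<and> \<not> q (a + int k)"

text \<open>Two maximal runs of length \<open>k\<close> covering 0 coincide; this makes the events
  in the proof of part (ii) disjoint.\<close>
lemma run_unique:
  assumes "a \<in> {1 - int k..0}" "b \<in> {1 - int k..0}" "run q k a" "run q k b"
  shows "a = b"
proof (rule ccontr)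
  assume "a \<noteq> b"
  then have "b - 1 \<in> {a..a + int k - 1} \<or> a - 1 \<in> {b..b + int k - 1}"
    using assms(1,2) by auto
  then show False using assms(3,4) unfolding run_def by blast
qed

lemma block0_run:
  assumes a: "a \<in> {1 - int k..0}" and r: "run q k a"
  shows "block0 q = {a..a + int k - 1}"
proof
  show "block0 q \<subseteq> {a..a + int k - 1}"
  proof
    fix j assume j: "j \<in> block0 q"
    have "j \<ge> a"
    proof (rule ccontr)
      assume "\<not> j \<ge> a"
      then have "q (a - 1)" using j a unfolding block0_def by auto
      with r show False unfolding run_def by blast
    qed
    moreover have "j \<le> a + int k - 1"
    proof (rule ccontr)
      assume "\<not> j \<le> a + int k - 1"
      then have "q (a + int k)" using j a unfolding block0_def by auto
      with r show False unfolding run_def by blast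
    qed
    ultimately show "j \<in> {a..a + int k - 1}" by simp
  qed
next
  show "{a..a + int k - 1} \<subseteq> block0 q"
  proof
    fix j assume "j \<in> {a..a + int k - 1}"
    then have "l \<in> {a..a + int k - 1}" if "min 0 j \<le> l" "l \<le> max 0 j" for l
      using that a by (auto simp: min_def max_def split: if_splits)
    then show "j \<in> block0 q" using r unfolding run_def block0_def by blast
  qed
qed

lemma block0_finite_run:
  assumes q0: "q 0" and fin: "finite (block0 q)"
  shows "Min (block0 q) \<in> {1 - int (card (block0 q))..0}"
    and "run q (card (block0 q)) (Min (block0 q))"
proof -
  define a where "a = Min (block0 q)"
  define b where "b = Max (block0 q)"
  have in0: "0 \<in> block0 q" using q0 unfolding block0_def by auto
  then have a0: "a \<le> 0" and b0: "b \<ge> 0" unfolding a_def b_def using fin by auto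
  have aC: "a \<in> block0 q" and bC: "b \<in> block0 q"
    unfolding a_def b_def using fin in0 by (metis Min_in Max_in empty_iff)+
  have qab: "q l" if "a \<le> l" "l \<le> b" for l
  proof (cases "l \<le> 0")
    case True then show ?thesis using aC a0 that unfolding block0_def by (auto simp: min_def max_def)
  next
    case False then show ?thesis using bC b0 that unfolding block0_def by (auto simp: min_def max_def)
  qed
  have eq: "block0 q = {a..b}"
  proof
    show "block0 q \<subseteq> {a..b}" unfolding a_def b_def using fin by auto
    show "{a..b} \<subseteq> block0 q" using qab a0 b0 unfolding block0_def by (auto simp: min_def max_def)
  qed
  have "a - 1 \<notin> block0 q" "b + 1 \<notin> block0 q" using eq by auto
  then have na: "\<not> q (a - 1)" and nb: "\<not> q (b + 1)"
    using qab a0 b0 unfolding block0_def by (auto simp: min_def max_def) (smt (verit))+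
  have bk: "b = a + int (card (block0 q)) - 1" using eq a0 b0 by simp
  show "Min (block0 q) \<in> {1 - int (card (block0 q))..0}"
    using a0 b0 bk unfolding a_def by simp
  show "run q (card (block0 q)) (Min (block0 q))"
    using na nb qab bk unfolding run_def a_def[symmetric] by auto
qed

lemma block0_card_iff:
  assumes k: "k \<ge> 1"
  shows "(q 0 \<and> finite (block0 q) \<and> card (block0 q) = k) \<longleftrightarrow> (\<exists>a\<in>{1 - int k..0}. run q k a)"
proof
  assume "q 0 \<and> finite (block0 q) \<and> card (block0 q) = k"
  then show "\<exists>a\<in>{1 - int k..0}. run q k a" using block0_finite_run by blast
next
  assume "\<exists>a\<in>{1 - int k..0}. run q k a"
  then obtain a where a: "a \<in> {1 - int k..0}" "run q k a" by blast
  then have "q 0" unfolding run_def by auto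
  then show "q 0 \<and> finite (block0 q) \<and> card (block0 q) = k"
    using block0_run[OF a] by simp
qed

definition block_size_is :: "(int \<Rightarrow> bool) \<Rightarrow> nat \<Rightarrow> bool" where
  "block_size_is q k \<longleftrightarrow> (if k = 0 then \<not> q 0 else \<exists>a\<in>{1 - int k..0}. run q k a)"

lemma Cblock_size_iff:
  "(finite (Cblock (\<lambda>i. if q i then (1::enat) else 0) 0) \<and>
     card (Cblock (\<lambda>i. if q i then (1::enat) else 0) 0) = k) \<longleftrightarrow> block_size_is q k"
proof (cases "k = 0")
  case True
  have "0 \<in> block0 q" if "q 0" using that by (auto simp: block0_def)
  then show ?thesis using True by (auto simp: Cblock_indicator block_size_is_def card_gt_0_iff)
next
  case False
  have "q 0" if "run q k a" "a \<in> {1 - int k..0}" for a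
    using that unfolding run_def by auto
  then show ?thesis using block0_card_iff[of k q] False
    by (auto simp: Cblock_indicator block_size_is_def)
qed

section \<open>The lifetime law and the law of the first renewal\<close>

locale bounded_lifetime =
  fixes mu :: "real measure"
  assumes mu_prob: "prob_space mu"
    and mu_sets: "sets mu = sets borel"
    and mu_pos: "emeasure mu {..0} = 0"
    and mu_bdd: "\<exists>B. emeasure mu {B<..} = 0"
begin

interpretation mu: prob_space mu by (rule mu_prob)

lemma space_mu: "space mu = UNIV"
  using sets_eq_imp_space_eq[OF mu_sets] by simp

lemma mu_meas[measurable]: "A \<in> sets borel \<Longrightarrow> A \<in> sets mu"
  using mu_sets by simp

definition tail :: "real \<Rightarrow> real" where "tail t = measure mu {t<..}"

lemma tail_antimono: "s \<le> t \<Longrightarrow> tail t \<le> tail s"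
  unfolding tail_def by (intro mu.finite_measure_mono) auto

lemma tail_0: "tail 0 = 1"
proof -
  have "{0<..} = space mu - {..0::real}" by (auto simp: space_mu)
  then show ?thesis
    using mu.prob_compl[of "{..0}"] mu_pos by (simp add: tail_def mu.emeasure_eq_measure)
qed

definition Tmax :: real where "Tmax = Inf {x. tail x = 0}"

lemma tail_null_nonempty: "{x. tail x = 0} \<noteq> {}"
  using mu_bdd by (auto simp: tail_def mu.emeasure_eq_measure)

lemma tail_null_pos: "tail x = 0 \<Longrightarrow> x > 0"
  using tail_antimono[of x 0] tail_0 by (cases "x > 0") auto

lemma tail_Tmax: "tail Tmax = 0"
proof -
  have "Tmax + 1 / Suc n \<in> {x. tail x = 0}" for n
  proof -
    obtain y where "tail y = 0" "y < Tmax + 1 / Suc n"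
      using cInf_lessD[OF tail_null_nonempty, of "Tmax + 1 / Suc n"]
      unfolding Tmax_def by auto
    then show ?thesis
      using tail_antimono[of y "Tmax + 1 / Suc n"] by (simp add: tail_def measure_nonneg antisym)
  qed
  then have "emeasure mu (\<Union>n. {Tmax + 1 / Suc n<..}) = 0"
    by (intro emeasure_UN_eq_0) (auto simp: tail_def mu.emeasure_eq_measure)
  moreover have "(\<Union>n. {Tmax + 1 / Suc n<..}) = {Tmax<..}"
  proof (intro set_eqI iffI)
    fix x assume "x \<in> {Tmax<..}"
    then obtain n where "1 / Suc n < x - Tmax"
      by (metis diff_gt_0_iff_gt greaterThan_iff nat_approx_posE)
    then have "Tmax + 1 / Suc n < x" by simp
    then show "x \<in> (\<Union>n. {Tmax + 1 / Suc n<..})" by blast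
  qed (auto intro: add_pos_pos less_trans[rotated])
  ultimately show ?thesis by (simp add: tail_def mu.emeasure_eq_measure)
qed

lemma Tmax_pos: "Tmax > 0"
  using tail_Tmax tail_null_pos by blast

lemma tail_pos: "t < Tmax \<Longrightarrow> tail t > 0"
  using cInf_lower[of t "{x. tail x = 0}"] tail_null_pos
  unfolding Tmax_def by (force simp: tail_def measure_nonneg less_le bdd_below_def)

lemma tail_zero: "Tmax \<le> t \<Longrightarrow> tail t = 0"
  using tail_antimono[of Tmax t] tail_Tmax by (simp add: tail_def measure_nonneg antisym)

lemma T_S_eq: "T_S mu = Tmax"
  unfolding T_S_def
proof (rule cSup_eq_maximum)
  show "Tmax \<in> supp_S mu"
    unfolding supp_S_def
  proof safe
    fix e :: real assume e: "e > 0"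
    have "tail (Tmax - e / 2) \<le> measure mu (ball Tmax e \<union> {Tmax<..})"
      unfolding tail_def using e by (intro mu.finite_measure_mono) (auto simp: dist_real_def)
    also have "\<dots> \<le> measure mu (ball Tmax e) + tail Tmax"
      unfolding tail_def by (intro measure_Un_le) auto
    finally show "emeasure mu (ball Tmax e) > 0"
      using tail_Tmax tail_pos[of "Tmax - e / 2"] e by (simp add: mu.emeasure_eq_measure)
  qed
next
  fix x assume x: "x \<in> supp_S mu"
  show "x \<le> Tmax"
  proof (rule ccontr)
    assume "\<not> x \<le> Tmax"
    then have "measure mu (ball x (x - Tmax)) \<le> tail Tmax"
      unfolding tail_def by (intro mu.finite_measure_mono) (auto simp: dist_real_def)
    moreover have "emeasure mu (ball x (x - Tmax)) > 0"
      using x \<open>\<not> x \<le> Tmax\<close> unfolding supp_S_def by simp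
    ultimately show False using tail_Tmax by (simp add: mu.emeasure_eq_measure measure_nonneg antisym)
  qed
qed

end

text \<open>The law \<open>nu_S\<close> of the first renewal time.  Its normalisation is assumed
  here; in the theorem it follows from \<open>nu_S\<close> being the law of \<open>T_1\<close>.\<close>
locale stationary_delay = bounded_lifetime +
  assumes nu_prob: "prob_space (nu_S mu)"
begin

interpretation mu: prob_space mu by (rule mu_prob)
interpretation nu: prob_space "nu_S mu" by (rule nu_prob)

lemma tail_meas[measurable]: "tail \<in> borel_measurable borel"
proof -
  have "mono (\<lambda>t. - tail t)"
    unfolding mono_def using tail_antimono by simp
  then have "(\<lambda>t. - tail t) \<in> borel_measurable borel" by (rule borel_measurable_mono)
  then have "(\<lambda>t. - (- tail t)) \<in> borel_measurable borel" by measurable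
  then show ?thesis by simp
qed

definition nu_dens :: "real \<Rightarrow> ennreal" where
  "nu_dens t = indicator {0<..} t * ennreal (tail t / mean_S mu)"

lemma nu_eq: "nu_S mu = density lborel nu_dens"
  unfolding nu_S_def nu_dens_def tail_def by simp

lemma nu_dens_meas[measurable]: "nu_dens \<in> borel_measurable borel"
  unfolding nu_dens_def by measurable

lemma sets_nu[measurable_cong]: "sets (nu_S mu) = sets borel"
  by (simp add: nu_eq)

lemma space_nu: "space (nu_S mu) = UNIV"
  by (simp add: nu_eq)

lemma emeasure_nu:
  "A \<in> sets borel \<Longrightarrow> emeasure (nu_S mu) A = (\<integral>\<^sup>+ x. nu_dens x * indicator A x \<partial>lborel)"
  unfolding nu_eq by (rule emeasure_density) auto

lemma nu_dens_zero_null: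
  assumes "A \<in> sets borel" "\<And>x. x \<in> A \<Longrightarrow> nu_dens x = 0"
  shows "measure (nu_S mu) A = 0"
proof -
  have "(\<lambda>x. nu_dens x * indicator A x) = (\<lambda>_. 0)"
  proof
    fix x show "nu_dens x * indicator A x = 0"
      using assms(2)[of x] by (cases "x \<in> A") simp_all
  qed
  then show ?thesis using emeasure_nu[OF assms(1)] by (simp add: nu.emeasure_eq_measure)
qed

lemma mean_pos: "mean_S mu > 0"
proof (rule ccontr)
  assume "\<not> mean_S mu > 0"
  then have "nu_dens t = 0" for t
    using tail_null_pos[of t] by (auto simp: nu_dens_def ennreal_neg divide_nonneg_nonpos tail_def)
  then have "measure (nu_S mu) UNIV = 0" by (intro nu_dens_zero_null) auto
  then show False using nu.prob_space space_nu by simp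
qed

lemma nu_single: "measure (nu_S mu) {x} = 0"
proof -
  have "{x} \<in> null_sets lborel" by (auto simp: null_sets_def)
  then have "AE y in lborel. y \<notin> {x}" by (rule AE_not_in)
  then have "AE y in lborel. y \<in> {x} \<longrightarrow> nu_dens y = 0" by eventually_elim auto
  then have "{x} \<in> null_sets (nu_S mu)"
    unfolding nu_eq by (subst null_sets_density_iff) auto
  then have "emeasure (nu_S mu) {x} = 0" by auto
  then show ?thesis by (simp add: nu.emeasure_eq_measure)
qed

text \<open>The density is positive on \<open>(0,Tmax)\<close>, so \<open>nu_S\<close> charges every
  subinterval.\<close>
lemma nu_Ioo_pos:
  assumes "0 \<le> a" "a < b" "b \<le> Tmax"
  shows "measure (nu_S mu) {a<..<b} > 0"
proof (rule ccontr)
  assume "\<not> measure (nu_S mu) {a<..<b} > 0"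
  then have "(\<integral>\<^sup>+ x. nu_dens x * indicator {a<..<b} x \<partial>lborel) = 0"
    using measure_nonneg[of "nu_S mu" "{a<..<b}"]
    by (simp add: emeasure_nu[symmetric] nu.emeasure_eq_measure)
  then have "AE x in lborel. nu_dens x * indicator {a<..<b} x = 0"
    by (subst (asm) nn_integral_0_iff_AE) auto
  then have "AE x in lborel. x \<notin> {a<..<b}"
  proof eventually_elim
    case (elim x)
    show ?case
    proof
      assume x: "x \<in> {a<..<b}"
      then have "nu_dens x > 0"
        using assms tail_pos[of x] mean_pos by (auto simp: nu_dens_def)
      with elim x show False by simp
    qed
  qed
  then have "emeasure lborel {a<..<b} = 0"
    by (subst (asm) AE_iff_measurable[of "{a<..<b}"]) auto
  with assms show False by simp
qed

definition F :: "real \<Rightarrow> real" where "F x = measure (nu_S mu) {..x}"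

lemma F_cont: "isCont F x"
proof -
  interpret real_distribution "nu_S mu" by unfold_locales (simp add: sets_nu)
  have "cdf (nu_S mu) = F" by (auto simp: cdf_def F_def)
  then show ?thesis using isCont_cdf nu_single by metis
qed

lemma F_cont_on: "continuous_on A F"
  using F_cont by (simp add: continuous_at_imp_continuous_on)

lemma F_mono: "mono F"
  unfolding mono_def F_def by (auto intro!: nu.finite_measure_mono)

lemma F_range: "0 \<le> F x" "F x \<le> 1"
  unfolding F_def by auto

lemma F_split: "a \<le> b \<Longrightarrow> F b = F a + measure (nu_S mu) {a<..b}"
proof -
  assume "a \<le> b"
  then have "{..b} = {..a} \<union> {a<..b}" by auto
  moreover have "measure (nu_S mu) ({..a} \<union> {a<..b}) = F a + measure (nu_S mu) {a<..b}"
    unfolding F_def by (rule nu.finite_measure_Union) auto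
  ultimately show ?thesis unfolding F_def by simp
qed

lemma nu_Ioc_Ioo: "measure (nu_S mu) {a<..b} = measure (nu_S mu) {a<..<b}"
proof (cases "a < b")
  case True
  then have "{a<..b} = {a<..<b} \<union> {b}" by auto
  moreover have "measure (nu_S mu) ({a<..<b} \<union> {b}) = measure (nu_S mu) {a<..<b} + measure (nu_S mu) {b}"
    by (rule nu.finite_measure_Union) auto
  ultimately show ?thesis using nu_single[of b] by simp
qed simp

lemma F_strict: "0 \<le> a \<Longrightarrow> a < b \<Longrightarrow> b \<le> Tmax \<Longrightarrow> F a < F b"
  using nu_Ioo_pos[of a b] F_split[of a b] nu_Ioc_Ioo by simp

lemma F_nonpos: "x \<le> 0 \<Longrightarrow> F x = 0"
proof -
  assume x: "x \<le> 0"
  have "measure (nu_S mu) {..x} = 0"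
    using x by (intro nu_dens_zero_null) (auto simp: nu_dens_def)
  then show ?thesis by (simp add: F_def)
qed

lemma F_one: "Tmax \<le> x \<Longrightarrow> F x = 1"
proof -
  assume x: "Tmax \<le> x"
  have "measure (nu_S mu) {x<..} = 0"
    using x tail_zero by (intro nu_dens_zero_null) (auto simp: nu_dens_def)
  moreover have "{x<..} = space (nu_S mu) - {..x}" by (auto simp: space_nu)
  ultimately show ?thesis using nu.prob_compl[of "{..x}"] by (simp add: F_def)
qed

lemma nu_Ioo_0: "0 \<le> t \<Longrightarrow> measure (nu_S mu) {0<..<t} = F t"
  using F_split[of 0 t] F_nonpos[of 0] nu_Ioc_Ioo[of 0 t] by simp

lemma nu_Ioo_T: "x \<le> Tmax \<Longrightarrow> measure (nu_S mu) {x<..<Tmax} = 1 - F x"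
  using F_split[of x Tmax] F_one[of Tmax] nu_Ioc_Ioo[of x Tmax] by simp

lemma psi_F:
  assumes "0 \<le> s" "s \<le> Tmax"
  shows "psi_S mu (F s) = s"
proof -
  have F0: "F 0 = 0" and F1: "F Tmax = 1" by (simp_all add: F_nonpos F_one)
  consider "s = 0" | "s = Tmax" | "0 < s" "s < Tmax" using assms by linarith
  then show ?thesis
  proof cases
    case 1 then show ?thesis using F0 by (simp add: psi_S_def)
  next
    case 2 then show ?thesis using F1 by (simp add: psi_S_def T_S_eq)
  next
    case 3
    have "(THE t. t \<in> {0<..<T_S mu} \<and> measure (nu_S mu) {0<..<t} = F s) = s"
    proof (rule the_equality)
      show "s \<in> {0<..<T_S mu} \<and> measure (nu_S mu) {0<..<s} = F s"
        using 3 nu_Ioo_0[of s] by (simp add: T_S_eq)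
    next
      fix t assume t: "t \<in> {0<..<T_S mu} \<and> measure (nu_S mu) {0<..<t} = F s"
      then have t0: "0 < t" "t < Tmax" by (auto simp: T_S_eq)
      then have "F t = F s" using t nu_Ioo_0[of t] by simp
      then show "t = s"
        using F_strict[of t s] F_strict[of s t] t0 3 by (cases t s rule: linorder_cases) simp_all
    qed
    moreover have "0 < F s" "F s < 1" using F_strict[of 0 s] F_strict[of s Tmax] F0 F1 3 by simp_all
    ultimately show ?thesis unfolding psi_S_def by simp
  qed
qed

lemma F_image: "F ` {0..Tmax} = {0..1}"
proof
  show "F ` {0..Tmax} \<subseteq> {0..1}" using F_range by auto
  show "{0..1} \<subseteq> F ` {0..Tmax}"
  proof
    fix z :: real assume "z \<in> {0..1}"
    then have "F 0 \<le> z" "z \<le> F Tmax" by (simp_all add: F_nonpos F_one)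
    then obtain s where "0 \<le> s" "s \<le> Tmax" "F s = z"
      using IVT'[of F 0 z Tmax, OF _ _ _ F_cont_on] Tmax_pos by auto
    then show "z \<in> F ` {0..Tmax}" by auto
  qed
qed

lemma psi_range:
  assumes "0 \<le> x" "x \<le> 1"
  shows "0 \<le> psi_S mu x \<and> psi_S mu x \<le> Tmax"
proof -
  have "x \<in> F ` {0..Tmax}" using assms F_image by simp
  then obtain s where "s \<in> {0..Tmax}" "x = F s" by blast
  then show ?thesis using psi_F by simp
qed

lemma psi_ucont: "uniformly_continuous_on {0..1} (psi_S mu)"
proof -
  have "continuous_on (F ` {0..Tmax}) (psi_S mu)"
    by (rule continuous_on_inv[OF F_cont_on compact_Icc]) (simp add: psi_F)
  then show ?thesis by (intro compact_uniformly_continuous) (simp_all add: F_image)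
qed

lemma psi_F_scaled: "t \<ge> 0 \<Longrightarrow> psi_S mu (F (Tmax * t)) / Tmax = min t 1"
proof -
  assume t: "t \<ge> 0"
  have "F (Tmax * t) = F (Tmax * min t 1)"
  proof (cases "t \<le> 1")
    case False
    then have "Tmax \<le> Tmax * t" using Tmax_pos by simp
    then show ?thesis using False F_one[of "Tmax * t"] F_one[of Tmax] by simp
  qed simp
  moreover have "psi_S mu (F (Tmax * min t 1)) = Tmax * min t 1"
    using t Tmax_pos by (intro psi_F) (auto simp: min_def)
  ultimately show ?thesis using Tmax_pos by simp
qed

lemma q_S_eq:
  assumes t: "t \<ge> 0"
  shows "q_S mu k (min t 1) =
    (if k = 0 then 1 - F (Tmax * t) else real k * (1 - F (Tmax * t))^2 * F (Tmax * t) ^ k)"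
proof -
  let ?p = "F (Tmax * t)"
  have "Tmax * t \<le> Tmax \<longleftrightarrow> t \<le> 1" using Tmax_pos by simp
  then have zT: "min t 1 * Tmax = min (Tmax * t) Tmax" by (auto simp: min_def mult.commute)
  have Fz: "F (min (Tmax * t) Tmax) = ?p"
    using F_one[of "Tmax * t"] F_one[of Tmax] by (cases "Tmax * t \<le> Tmax") simp_all
  have z0: "0 \<le> min (Tmax * t) Tmax" using Tmax_pos t by simp
  have "measure (nu_S mu) {min t 1 * Tmax<..<Tmax} = 1 - ?p"
    unfolding zT using nu_Ioo_T[of "min (Tmax * t) Tmax"] Fz by simp
  moreover have "measure (nu_S mu) {0<..<min t 1 * Tmax} = ?p"
    unfolding zT using nu_Ioo_0[OF z0] Fz by simp
  ultimately show ?thesis unfolding q_S_def T_S_eq by simp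
qed

end

section \<open>Uniform convergence of monotone functions to a continuous limit\<close>

lemma grid_cell:
  fixes T s :: real
  assumes T: "T > 0" and s: "0 \<le> s" "s < T"
  obtains j where "j \<le> N" "T * real j / real (Suc N) \<le> s" "s \<le> T * real (Suc j) / real (Suc N)"
proof -
  define x where "x = s * real (Suc N) / T"
  define j where "j = nat \<lfloor>x\<rfloor>"
  have x0: "x \<ge> 0" unfolding x_def using s T by simp
  then have jx: "real j \<le> x" "x < real j + 1" unfolding j_def by (simp_all add: of_nat_nat)
  moreover have "x < real (Suc N)" unfolding x_def using s T by (simp add: divide_less_eq)
  ultimately have "j \<le> N" by simp
  moreover have "T * real j / real (Suc N) \<le> s"
    using jx(1) T unfolding x_def by (simp add: le_divide_eq divide_le_eq mult.commute)
  moreover have "s \<le> T * real (Suc j) / real (Suc N)"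
    using jx(2) T unfolding x_def by (simp add: divide_less_eq le_divide_eq mult.commute add.commute)
  ultimately show ?thesis using that by blast
qed

lemma fine_grid:
  fixes F :: "real \<Rightarrow> real"
  assumes T: "T > 0" and F_cont: "continuous_on {0..T} F" and e: "e > 0"
  obtains N where "\<And>j. j \<le> N \<Longrightarrow>
    \<bar>F (T * real (Suc j) / real (Suc N)) - F (T * real j / real (Suc N))\<bar> < e"
proof -
  obtain \<eta> where \<eta>: "\<eta> > 0"
    and \<eta>F: "\<And>x x'. x \<in> {0..T} \<Longrightarrow> x' \<in> {0..T} \<Longrightarrow> dist x' x < \<eta> \<Longrightarrow> dist (F x') (F x) < e"
    using compact_uniformly_continuous[OF F_cont compact_Icc] e
    unfolding uniformly_continuous_on_def by metis
  obtain N :: nat where "T / \<eta> < real N" using reals_Archimedean2 by blast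
  then have mesh: "T / real (Suc N) < \<eta>"
    using \<eta> by (simp add: divide_less_eq mult.commute) (smt (verit) mult_left_mono of_nat_0_le_iff)
  define g where "g j = T * real j / real (Suc N)" for j :: nat
  have g_in: "g j \<in> {0..T}" if "j \<le> Suc N" for j
    using that T unfolding g_def by (auto simp: divide_le_eq)
  have "g (Suc j) - g j = T / real (Suc N)" for j
    unfolding g_def by (simp add: diff_divide_distrib[symmetric] algebra_simps)
  then have "dist (g (Suc j)) (g j) < \<eta>" for j using mesh T by (simp add: dist_real_def)
  then have "\<bar>F (g (Suc j)) - F (g j)\<bar> < e" if "j \<le> N" for j
    using \<eta>F[of "g j" "g (Suc j)"] g_in[of j] g_in[of "Suc j"] that by (simp add: dist_real_def)
  then show ?thesis using that unfolding g_def by blast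
qed

text \<open>Polya's argument: monotone functions converging on all grids to a monotone limit
  that is continuous on \<open>[0,T]\<close> and constant after \<open>T\<close> converge uniformly
  on \<open>[0,\<infinity>)\<close>.\<close>
lemma uniform_convergence_monotone:
  fixes G :: "nat \<Rightarrow> real \<Rightarrow> real" and F :: "real \<Rightarrow> real"
  assumes T: "T > 0"
    and F_mono: "mono F" and F_cont: "continuous_on {0..T} F"
    and F_flat: "\<And>s. T \<le> s \<Longrightarrow> F s = F T"
    and G_mono: "\<And>m s s'. s \<le> s' \<Longrightarrow> G m s \<le> G m s'"
    and G_le: "\<And>m s. G m s \<le> F T"
    and conv: "\<And>j N. (\<lambda>m. G m (T * real j / real (Suc N))) \<longlonglongrightarrow> F (T * real j / real (Suc N))"
    and d: "\<delta> > 0"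
  shows "eventually (\<lambda>m. \<forall>s\<ge>0. \<bar>G m s - F s\<bar> < \<delta>) sequentially"
proof -
  obtain N where N: "\<And>j. j \<le> N \<Longrightarrow>
      \<bar>F (T * real (Suc j) / real (Suc N)) - F (T * real j / real (Suc N))\<bar> < \<delta> / 2"
    using fine_grid[OF T F_cont, of "\<delta> / 2"] d by auto
  define g where "g j = T * real j / real (Suc N)" for j :: nat
  have "eventually (\<lambda>m. \<bar>G m (g j) - F (g j)\<bar> < \<delta> / 2) sequentially" for j
    using tendstoD[OF conv[of j N], of "\<delta> / 2"] d unfolding g_def by (simp add: dist_real_def)
  then have "eventually (\<lambda>m. \<forall>j\<in>{..Suc N}. \<bar>G m (g j) - F (g j)\<bar> < \<delta> / 2) sequentially"
    by (intro eventually_ball_finite) auto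
  then show ?thesis
  proof eventually_elim
    case (elim m)
    show ?case
    proof (intro allI impI)
      fix s :: real assume s0: "0 \<le> s"
      show "\<bar>G m s - F s\<bar> < \<delta>"
      proof (cases "T \<le> s")
        case True
        have "g (Suc N) = T" unfolding g_def by simp
        then have "\<bar>G m T - F T\<bar> < \<delta> / 2" using elim by (metis atMost_iff order_refl)
        moreover have "G m T \<le> G m s" "G m s \<le> F T" using True G_mono G_le by auto
        ultimately show ?thesis using F_flat[OF True] d by linarith
      next
        case False
        then obtain j where j: "j \<le> N" "g j \<le> s" "s \<le> g (Suc j)"
          using grid_cell[OF T s0] unfolding g_def by (metis not_le)
        have "\<bar>F (g (Suc j)) - F (g j)\<bar> < \<delta> / 2" using N[OF j(1)] unfolding g_def .
        moreover have "\<bar>G m (g j) - F (g j)\<bar> < \<delta> / 2" "\<bar>G m (g (Suc j)) - F (g (Suc j))\<bar> < \<delta> / 2"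
          using elim j(1) by simp_all
        moreover have "F (g j) \<le> F s" "F s \<le> F (g (Suc j))"
          using F_mono j unfolding mono_def by auto
        moreover have "G m (g j) \<le> G m s" "G m s \<le> G m (g (Suc j))" using G_mono j by auto
        ultimately show ?thesis by linarith
      qed
    qed
  qed
qed

lemma SUP_in_interval:
  fixes h :: "'b \<Rightarrow> real"
  assumes "S \<noteq> {}" "\<And>t. t \<in> S \<Longrightarrow> 0 \<le> h t \<and> h t \<le> c"
  shows "0 \<le> (SUP t\<in>S. h t) \<and> (SUP t\<in>S. h t) \<le> c"
proof
  obtain t0 where t0: "t0 \<in> S" using assms(1) by blast
  have "bdd_above (h ` S)" using assms(2) by (intro bdd_aboveI[of _ c]) auto
  then have "h t0 \<le> (SUP t\<in>S. h t)" using t0 by (intro cSUP_upper)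
  then show "0 \<le> (SUP t\<in>S. h t)" using assms(2)[OF t0] by linarith
  show "(SUP t\<in>S. h t) \<le> c" using assms by (intro cSUP_least) auto
qed

lemma (in stationary_delay) psi_profile_error:
  assumes a: "a \<in> {0..1}" and t: "t \<ge> 0"
  shows "\<bar>min (psi_S mu a / Tmax) 1 - min t 1\<bar> = \<bar>psi_S mu a - psi_S mu (F (Tmax * t))\<bar> / Tmax"
proof -
  have "min (psi_S mu a / Tmax) 1 = psi_S mu a / Tmax"
    using psi_range[of a] a Tmax_pos by (simp add: divide_le_eq_1)
  moreover have "psi_S mu (F (Tmax * t)) / Tmax = min t 1" using t by (rule psi_F_scaled)
  ultimately have "min (psi_S mu a / Tmax) 1 - min t 1 = (psi_S mu a - psi_S mu (F (Tmax * t))) / Tmax"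
    by (simp add: diff_divide_distrib)
  then show ?thesis using Tmax_pos by (simp add: abs_divide)
qed

text \<open>Deterministic core of part (i): if \<open>A\<close> approximates \<open>F\<close> uniformly, then
  \<open>psi_S(A)/T_S\<close> approximates the profile \<open>min t 1\<close> uniformly.\<close>
lemma (in stationary_delay) psi_scaled_uniform:
  fixes A :: "'b \<Rightarrow> real \<Rightarrow> real"
  assumes unif: "\<And>\<delta>. \<delta> > 0 \<Longrightarrow> eventually (\<lambda>x. \<forall>s\<ge>0. \<bar>A x s - F s\<bar> < \<delta>) L"
    and A_range: "\<And>x s. A x s \<in> {0..1}"
    and T0: "T0 > 0"
  shows "((\<lambda>x. SUP t\<in>{0..T0}. \<bar>min (psi_S mu (A x (Tmax * t)) / Tmax) 1 - min t 1\<bar>) \<longlongrightarrow> 0) L"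
proof (rule tendstoI)
  fix \<epsilon> :: real assume eps: "\<epsilon> > 0"
  then have "\<epsilon> * Tmax / 2 > 0" using Tmax_pos by simp
  then obtain \<delta> where d: "\<delta> > 0"
    and dpsi: "\<And>x x'. x \<in> {0..1} \<Longrightarrow> x' \<in> {0..1} \<Longrightarrow> dist x' x < \<delta> \<Longrightarrow>
      dist (psi_S mu x') (psi_S mu x) < \<epsilon> * Tmax / 2"
    using psi_ucont unfolding uniformly_continuous_on_def by metis
  show "eventually (\<lambda>x. dist (SUP t\<in>{0..T0}. \<bar>min (psi_S mu (A x (Tmax * t)) / Tmax) 1 - min t 1\<bar>) 0 < \<epsilon>) L"
    using unif[OF d]
  proof eventually_elim
    case (elim x)
    have "\<bar>min (psi_S mu (A x (Tmax * t)) / Tmax) 1 - min t 1\<bar> \<le> \<epsilon> / 2" if t: "t \<in> {0..T0}" for t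
    proof -
      have "Tmax * t \<ge> 0" using t Tmax_pos by simp
      then have "\<bar>A x (Tmax * t) - F (Tmax * t)\<bar> < \<delta>" using elim by blast
      then have "\<bar>psi_S mu (A x (Tmax * t)) - psi_S mu (F (Tmax * t))\<bar> < \<epsilon> * Tmax / 2"
        using dpsi[of "F (Tmax * t)" "A x (Tmax * t)"] A_range F_range by (simp add: dist_real_def)
      then show ?thesis
        using psi_profile_error[OF A_range, of t] t Tmax_pos by (simp add: divide_le_eq)
    qed
    then have "0 \<le> (SUP t\<in>{0..T0}. \<bar>min (psi_S mu (A x (Tmax * t)) / Tmax) 1 - min t 1\<bar>)
      \<and> (SUP t\<in>{0..T0}. \<bar>min (psi_S mu (A x (Tmax * t)) / Tmax) 1 - min t 1\<bar>) \<le> \<epsilon> / 2"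
      using T0 by (intro SUP_in_interval) auto
    then show ?case using eps by (simp add: dist_real_def)
  qed
qed

section \<open>A family of independent stationary renewal processes\<close>

lemma (in prob_space) indep_vars_reindex:
  assumes X: "indep_vars M' X I" and f: "inj_on f J" "f ` J \<subseteq> I"
  shows "indep_vars (\<lambda>j. M' (f j)) (\<lambda>j. X (f j)) J"
  unfolding indep_vars_def2
proof (intro conjI ballI)
  show "random_variable (M' (f j)) (X (f j))" if "j \<in> J" for j
    using X f that unfolding indep_vars_def2 by auto
  have big: "indep_sets (\<lambda>i. {X i -` A \<inter> space M |A. A \<in> sets (M' i)}) I"
    using X unfolding indep_vars_def2 by simp
  show "indep_sets (\<lambda>j. {X (f j) -` A \<inter> space M |A. A \<in> sets (M' (f j))}) J"
  proof (rule indep_setsI)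
    fix j assume "j \<in> J"
    then show "{X (f j) -` A \<inter> space M |A. A \<in> sets (M' (f j))} \<subseteq> events"
      using big f unfolding indep_sets_def by blast
  next
    fix A K assume K: "K \<noteq> {}" "K \<subseteq> J" "finite K"
      and A: "\<forall>j\<in>K. A j \<in> {X (f j) -` A \<inter> space M |A. A \<in> sets (M' (f j))}"
    have injK: "inj_on f K" using f K by (auto intro: inj_on_subset)
    define B where "B i = A (the_inv_into K f i)" for i
    have B: "B (f j) = A j" if "j \<in> K" for j
      using the_inv_into_f_f[OF injK that] by (simp add: B_def)
    have "\<forall>i\<in>f ` K. B i \<in> {X i -` A \<inter> space M |A. A \<in> sets (M' i)}"
      using A B by auto
    moreover have "f ` K \<subseteq> I" using K f by blast
    ultimately have "prob (\<Inter>i\<in>f ` K. B i) = (\<Prod>i\<in>f ` K. prob (B i))"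
      using K by (intro indep_setsD[OF big]) auto
    moreover have "(\<Inter>i\<in>f ` K. B i) = (\<Inter>j\<in>K. A j)" using B by auto
    moreover have "(\<Prod>i\<in>f ` K. prob (B i)) = (\<Prod>j\<in>K. prob (A j))"
      using B by (simp add: prod.reindex[OF injK] cong: prod.cong)
    ultimately show "prob (\<Inter>j\<in>K. A j) = (\<Prod>j\<in>K. prob (A j))" by simp
  qed
qed

text \<open>The i.i.d. family of \<open>SR(mu)\<close>-processes indexed by \<open>\<int>\<close>: \<open>Z i 0\<close> is the
  first renewal time of process \<open>i\<close> and \<open>Z i (Suc k)\<close> its increments.\<close>
locale renewal_family = bounded_lifetime mu for mu +
  fixes M :: "'a measure" and Z :: "int \<Rightarrow> nat \<Rightarrow> 'a \<Rightarrow> real"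
  assumes M_prob: "prob_space M"
    and Z_indep: "prob_space.indep_vars M (\<lambda>_. borel) (\<lambda>(i, k). Z i k) UNIV"
    and Z_first: "\<And>i. distr M borel (Z i 0) = nu_S mu"
    and Z_incr: "\<And>i k. distr M borel (Z i (Suc k)) = mu"
begin

interpretation M: prob_space M by (rule M_prob)

lemma Z_meas[measurable]: "Z i k \<in> borel_measurable M"
  using Z_indep unfolding M.indep_vars_def2 by (metis UNIV_I case_prod_conv)

lemma nu_prob: "prob_space (nu_S mu)"
  using M.prob_space_distr[of "Z 0 0" borel] by (simp add: Z_first)

sublocale stationary_delay mu
  by (intro stationary_delay.intro bounded_lifetime_axioms stationary_delay_axioms.intro nu_prob)

lemma arrived_meas[measurable]: "Measurable.pred M (\<lambda>\<omega>. arrived (\<lambda>j. Z i j \<omega>) s)"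
  unfolding arrived_def by measurable

lemma AE_incr_pos: "AE \<omega> in M. \<forall>i k. Z i (Suc k) \<omega> > 0"
proof -
  have "AE x in mu. x > 0"
    using mu_pos by (subst AE_iff_measurable[of "{..0}"]) (auto simp: space_mu)
  then have "AE x in distr M borel (Z i (Suc k)). x > 0" for i k unfolding Z_incr .
  then have "AE \<omega> in M. Z i (Suc k) \<omega> > 0" for i k by (rule AE_distrD[OF Z_meas])
  then show ?thesis by (simp add: AE_all_countable)
qed

lemma AE_arrived_iff: "AE \<omega> in M. \<forall>i s. arrived (\<lambda>j. Z i j \<omega>) s \<longleftrightarrow> Z i 0 \<omega> \<le> s"
  using AE_incr_pos by eventually_elim (auto intro!: arrived_iff_first less_imp_le)

lemma indep_first: "M.indep_vars (\<lambda>_. borel) (\<lambda>i. Z i 0) UNIV"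
  using M.indep_vars_reindex[OF Z_indep, of "\<lambda>i. (i, 0)" UNIV] by (simp add: inj_on_def)

lemma prob_first_le: "M.prob {\<omega>\<in>space M. Z i 0 \<omega> \<le> s} = F s"
proof -
  have "F s = measure (distr M borel (Z i 0)) {..s}" unfolding F_def Z_first ..
  also have "\<dots> = measure M (Z i 0 -` {..s} \<inter> space M)" by (rule measure_distr) auto
  finally show ?thesis by (simp add: vimage_def Int_def conj_commute)
qed

lemma prob_first_gt: "M.prob {\<omega>\<in>space M. \<not> Z i 0 \<omega> \<le> s} = 1 - F s"
proof -
  have "{\<omega>\<in>space M. \<not> Z i 0 \<omega> \<le> s} = space M - {\<omega>\<in>space M. Z i 0 \<omega> \<le> s}" by auto
  then show ?thesis
    using M.prob_compl[of "{\<omega>\<in>space M. Z i 0 \<omega> \<le> s}"] prob_first_le[of i s] by simp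
qed

section \<open>Part (ii): the law of the block of active sites around 0\<close>

lemma prob_run:
  assumes k: "k \<ge> 1"
  shows "M.prob {\<omega>\<in>space M. run (\<lambda>i. Z i 0 \<omega> \<le> s) k a} = F s ^ k * (1 - F s)^2"
proof -
  define R where "R = {a..a + int k - 1}"
  define J where "J = insert (a - 1) (insert (a + int k) R)"
  define D where "D l = (if l \<in> R then {..s} else {s<..})" for l
  have "{\<omega>\<in>space M. run (\<lambda>i. Z i 0 \<omega> \<le> s) k a} = (\<Inter>l\<in>J. Z l 0 -` D l \<inter> space M)"
    using k by (auto simp: run_def J_def D_def R_def not_le)
  moreover have "M.prob (Z l 0 -` D l \<inter> space M) = (if l \<in> R then F s else 1 - F s)" for l
    using prob_first_le[of l s] prob_first_gt[of l s]
    by (auto simp: D_def vimage_def Int_def conj_commute not_le)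
  moreover have "M.prob (\<Inter>l\<in>J. Z l 0 -` D l \<inter> space M) = (\<Prod>l\<in>J. M.prob (Z l 0 -` D l \<inter> space M))"
    by (rule M.indep_varsD[OF indep_first]) (auto simp: J_def R_def D_def)
  moreover have "(\<Prod>l\<in>J. (if l \<in> R then F s else 1 - F s)) = (1 - F s) * ((1 - F s) * F s ^ k)"
    unfolding J_def using k by (simp add: R_def)
  ultimately show ?thesis by (simp add: power2_eq_square)
qed

lemma prob_block_size:
  "M.prob {\<omega>\<in>space M. block_size_is (\<lambda>i. Z i 0 \<omega> \<le> s) k}
    = (if k = 0 then 1 - F s else real k * (1 - F s)^2 * F s ^ k)"
proof (cases "k = 0")
  case True
  then show ?thesis using prob_first_gt[of 0 s] by (simp add: block_size_is_def)
next
  case False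
  define B where "B a = {\<omega>\<in>space M. run (\<lambda>i. Z i 0 \<omega> \<le> s) k a}" for a
  have "{\<omega>\<in>space M. block_size_is (\<lambda>i. Z i 0 \<omega> \<le> s) k} = (\<Union>a\<in>{1 - int k..0}. B a)"
    using False by (auto simp: block_size_is_def B_def)
  moreover have "M.prob (\<Union>a\<in>{1 - int k..0}. B a) = (\<Sum>a\<in>{1 - int k..0}. M.prob (B a))"
  proof (rule M.finite_measure_finite_Union)
    have "B a \<in> M.events" for a unfolding B_def run_def by measurable
    then show "B ` {1 - int k..0} \<subseteq> M.events" by blast
    show "disjoint_family_on B {1 - int k..0}"
      unfolding disjoint_family_on_def B_def using run_unique by blast
  qed simp
  moreover have "M.prob (B a) = F s ^ k * (1 - F s)^2" for a
    unfolding B_def using False by (intro prob_run) simp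
  ultimately show ?thesis using False by simp
qed

lemma pred_block_size_is:
  assumes [measurable]: "\<And>i. Measurable.pred M (P i)"
  shows "Measurable.pred M (\<lambda>\<omega>. block_size_is (\<lambda>i. P i \<omega>) k)"
  unfolding block_size_is_def run_def by measurable

theorem block_size_law:
  assumes t: "t \<ge> 0"
  shows "measure M {\<omega> \<in> space M.
            finite (Cblock (\<lambda>i. min (sr_count (\<lambda>j. Z i j \<omega>) (T_S mu * t)) 1) 0)
            \<and> card (Cblock (\<lambda>i. min (sr_count (\<lambda>j. Z i j \<omega>) (T_S mu * t)) 1) 0) = k}
        = q_S mu k (min t 1)"
proof -
  let ?s = "Tmax * t"
  let ?E = "\<lambda>P. {\<omega>\<in>space M. block_size_is (\<lambda>i. P i \<omega>) k}"
  have event: "{\<omega> \<in> space M.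
            finite (Cblock (\<lambda>i. min (sr_count (\<lambda>j. Z i j \<omega>) (T_S mu * t)) 1) 0)
            \<and> card (Cblock (\<lambda>i. min (sr_count (\<lambda>j. Z i j \<omega>) (T_S mu * t)) 1) 0) = k}
       = ?E (\<lambda>i \<omega>. arrived (\<lambda>j. Z i j \<omega>) ?s)"
    unfolding T_S_eq sr_count_min_1 Cblock_size_iff ..
  have AE: "AE \<omega> in M. \<omega> \<in> ?E (\<lambda>i \<omega>. arrived (\<lambda>j. Z i j \<omega>) ?s) \<longleftrightarrow> \<omega> \<in> ?E (\<lambda>i \<omega>. Z i 0 \<omega> \<le> ?s)"
    using AE_arrived_iff
  proof eventually_elim
    case (elim \<omega>)
    then have "(\<lambda>i. arrived (\<lambda>j. Z i j \<omega>) ?s) = (\<lambda>i. Z i 0 \<omega> \<le> ?s)" by blast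
    then show ?case by simp
  qed
  have "Measurable.pred M (\<lambda>\<omega>. Z i 0 \<omega> \<le> ?s)" for i by measurable
  then have meas: "?E (\<lambda>i \<omega>. arrived (\<lambda>j. Z i j \<omega>) ?s) \<in> sets M" "?E (\<lambda>i \<omega>. Z i 0 \<omega> \<le> ?s) \<in> sets M"
    using pred_block_size_is[where P="\<lambda>i \<omega>. arrived (\<lambda>j. Z i j \<omega>) ?s", OF arrived_meas]
      pred_block_size_is[where P="\<lambda>i \<omega>. Z i 0 \<omega> \<le> ?s"]
    by (simp_all add: pred_def)
  show ?thesis
    unfolding event measure_eq_AE[OF AE meas] prob_block_size q_S_eq[OF t] ..
qed

section \<open>Part (i): the hydrodynamic limit of the active fraction\<close>

definition emp_cdf :: "nat \<Rightarrow> real \<Rightarrow> 'a \<Rightarrow> real" where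
  "emp_cdf m s \<omega> = real (card {i\<in>{- int m..int m}. Z i 0 \<omega> \<le> s}) / real (2 * m + 1)"

lemma emp_cdf_sum:
  "emp_cdf m s \<omega> = (\<Sum>i\<in>{- int m..int m}. of_bool (Z i 0 \<omega> \<le> s)) / real (2 * m + 1)"
  unfolding emp_cdf_def by (simp add: Int_def)

lemma emp_cdf_meas[measurable]: "(\<lambda>\<omega>. emp_cdf m s \<omega>) \<in> borel_measurable M"
  unfolding emp_cdf_sum by measurable

lemma emp_cdf_range: "emp_cdf m s \<omega> \<in> {0..1}"
proof -
  have "card {i\<in>{- int m..int m}. Z i 0 \<omega> \<le> s} \<le> card {- int m..int m}"
    by (intro card_mono) auto
  then show ?thesis unfolding emp_cdf_def by (simp add: divide_le_eq_1)
qed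

lemma emp_cdf_mono:
  assumes "s \<le> s'"
  shows "emp_cdf m s \<omega> \<le> emp_cdf m s' \<omega>"
proof -
  have "finite {i\<in>{- int m..int m}. Z i 0 \<omega> \<le> s'}"
    by (rule finite_subset[of _ "{- int m..int m}"]) auto
  then have "card {i\<in>{- int m..int m}. Z i 0 \<omega> \<le> s} \<le> card {i\<in>{- int m..int m}. Z i 0 \<omega> \<le> s'}"
    using assms by (intro card_mono) auto
  then show ?thesis unfolding emp_cdf_def by (intro divide_right_mono) auto
qed

lemma emp_cdf_deviation:
  assumes eps: "\<epsilon> > 0"
  shows "M.prob {\<omega>\<in>space M. \<epsilon> \<le> \<bar>emp_cdf m s \<omega> - F s\<bar>} \<le> 2 * exp (-2 * \<epsilon>\<^sup>2 * real (2 * m + 1))"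
proof -
  define I where "I = {- int m..int m}"
  define X where "X i \<omega> = (of_bool (Z i 0 \<omega> \<le> s) :: real)" for i \<omega>
  define n where "n = real (2 * m + 1)"
  have n: "card I = 2 * m + 1" "n > 0" unfolding I_def n_def by simp_all
  have EX: "M.expectation (X i) = F s" for i
  proof -
    have "X i = indicator {\<omega>. Z i 0 \<omega> \<le> s}" by (auto simp: X_def indicator_def)
    then have "M.expectation (X i) = measure M ({\<omega>. Z i 0 \<omega> \<le> s} \<inter> space M)" by simp
    also have "{\<omega>. Z i 0 \<omega> \<le> s} \<inter> space M = {\<omega>\<in>space M. Z i 0 \<omega> \<le> s}" by auto
    finally show ?thesis using prob_first_le by simp
  qed
  interpret H: Hoeffding_ineq M I X "\<lambda>_. 0" "\<lambda>_. 1" "n * F s"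
  proof unfold_locales
    have "M.indep_vars (\<lambda>_. borel) (\<lambda>i. Z i 0) I"
      by (rule M.indep_vars_subset[OF indep_first]) simp
    then show "M.indep_vars (\<lambda>_. borel) X I"
      unfolding X_def by (rule M.indep_vars_compose2[where X="\<lambda>i. Z i 0"]) simp
    show "n * F s \<equiv> \<Sum>i\<in>I. M.expectation (X i)" by (simp add: EX n n_def)
    show "finite I" unfolding I_def by simp
    show "AE x in M. X i x \<in> {0..1}" for i by (auto simp: X_def)
  qed
  have "M.prob {x\<in>space M. \<bar>(\<Sum>i\<in>I. X i x) - n * F s\<bar> \<ge> \<epsilon> * n}
        \<le> 2 * exp (-2 * (\<epsilon> * n)\<^sup>2 / (\<Sum>i\<in>I. (1 - 0)\<^sup>2))"
    using eps n by (intro H.Hoeffding_ineq_abs_ge) (simp_all add: I_def)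
  also have "(\<Sum>i\<in>I. (1 - 0 :: real)\<^sup>2) = n" using n by (simp add: n_def)
  also have "-2 * (\<epsilon> * n)\<^sup>2 / n = -2 * \<epsilon>\<^sup>2 * n" using n by (simp add: power2_eq_square)
  also have "{x\<in>space M. \<bar>(\<Sum>i\<in>I. X i x) - n * F s\<bar> \<ge> \<epsilon> * n}
      = {\<omega>\<in>space M. \<epsilon> \<le> \<bar>emp_cdf m s \<omega> - F s\<bar>}"
  proof -
    have "emp_cdf m s \<omega> - F s = ((\<Sum>i\<in>I. X i \<omega>) - n * F s) / n" for \<omega>
      unfolding emp_cdf_sum X_def I_def n_def[symmetric] using n by (simp add: field_simps)
    then have "\<bar>emp_cdf m s \<omega> - F s\<bar> = \<bar>(\<Sum>i\<in>I. X i \<omega>) - n * F s\<bar> / n" for \<omega>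
      using n by simp
    then show ?thesis using n by (simp add: le_divide_eq)
  qed
  finally show ?thesis unfolding n_def .
qed

end

lemma summable_exp_bound:
  assumes "c > 0"
  shows "summable (\<lambda>m::nat. 2 * exp (-2 * c * real (2 * m + 1)))"
proof -
  have "exp (-2 * c * real (2 * m + 1)) = exp (-4 * c) ^ m * exp (-2 * c)" for m :: nat
  proof -
    have "exp (-2 * c * real (2 * m + 1)) = exp (real m * (-4 * c) + (-2 * c))"
      by (rule arg_cong[where f=exp]) (simp add: algebra_simps)
    also have "\<dots> = exp (-4 * c) ^ m * exp (-2 * c)" by (simp only: exp_add exp_of_nat_mult)
    finally show ?thesis .
  qed
  then have "2 * exp (-2 * c * real (2 * m + 1)) = 2 * exp (-2 * c) * (exp (-4 * c)) ^ m" for m :: nat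
    by simp
  moreover have "summable (\<lambda>m::nat. 2 * exp (-2 * c) * (exp (-4 * c)) ^ m)"
    using assms by (intro summable_mult summable_geometric) simp
  ultimately show ?thesis by simp
qed

lemma AE_tendsto_of_AE_eventually:
  fixes X :: "nat \<Rightarrow> 'a \<Rightarrow> real"
  assumes "\<And>\<epsilon>. \<epsilon> > 0 \<Longrightarrow> AE \<omega> in M. eventually (\<lambda>m. \<bar>X m \<omega> - L\<bar> < \<epsilon>) sequentially"
  shows "AE \<omega> in M. (\<lambda>m. X m \<omega>) \<longlonglongrightarrow> L"
proof -
  have "AE \<omega> in M. \<forall>j::nat. eventually (\<lambda>m. \<bar>X m \<omega> - L\<bar> < 1 / Suc j) sequentially"
    using assms by (subst AE_all_countable) simp
  then show ?thesis
  proof eventually_elim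
    case (elim \<omega>)
    show ?case
    proof (rule tendstoI)
      fix e :: real assume "e > 0"
      then obtain j where j: "1 / Suc j < e" using nat_approx_posE by blast
      show "eventually (\<lambda>m. dist (X m \<omega>) L < e) sequentially"
        using elim[rule_format, of j] by eventually_elim (use j in \<open>auto simp: dist_real_def\<close>)
    qed
  qed
qed

context renewal_family
begin

interpretation M: prob_space M by (rule M_prob)

lemma AE_emp_cdf_conv: "AE \<omega> in M. (\<lambda>m. emp_cdf m s \<omega>) \<longlonglongrightarrow> F s"
proof (rule AE_tendsto_of_AE_eventually)
  fix \<epsilon> :: real assume eps: "\<epsilon> > 0"
  define A where "A m = {\<omega>\<in>space M. \<epsilon> \<le> \<bar>emp_cdf m s \<omega> - F s\<bar>}" for m
  have "summable (\<lambda>m. M.prob (A m))"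
    using eps emp_cdf_deviation[OF eps, of _ s]
    by (intro summable_comparison_test'[OF summable_exp_bound[of "\<epsilon>\<^sup>2"]])
       (simp_all add: A_def mult.assoc)
  then have "AE \<omega> in M. eventually (\<lambda>m. \<omega> \<in> space M - A m) sequentially"
    by (intro borel_cantelli_AE1) (auto simp: A_def M.emeasure_eq_measure)
  then show "AE \<omega> in M. eventually (\<lambda>m. \<bar>emp_cdf m s \<omega> - F s\<bar> < \<epsilon>) sequentially"
    by (rule AE_mp) (auto simp: A_def elim!: eventually_mono intro!: AE_I2)
qed

lemma AE_emp_cdf_uniform:
  "AE \<omega> in M. \<forall>\<delta>>0. eventually (\<lambda>m. \<forall>s\<ge>0. \<bar>emp_cdf m s \<omega> - F s\<bar> < \<delta>) sequentially"
proof -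
  have "AE \<omega> in M. \<forall>j N. (\<lambda>m. emp_cdf m (Tmax * real j / real (Suc N)) \<omega>)
      \<longlonglongrightarrow> F (Tmax * real j / real (Suc N))"
    by (simp add: AE_all_countable AE_emp_cdf_conv)
  then show ?thesis
  proof eventually_elim
    case (elim \<omega>)
    have "emp_cdf m s \<omega> \<le> F Tmax" for m s using emp_cdf_range F_one by simp
    then show ?case
      using Tmax_pos F_mono F_cont_on F_one emp_cdf_mono elim
      by (intro allI impI uniform_convergence_monotone[of Tmax F "\<lambda>m s. emp_cdf m s \<omega>"]) simp_all
  qed
qed

theorem hydrodynamic_limit:
  fixes mlam :: "real \<Rightarrow> nat"
  assumes mlam_lim: "filterlim mlam at_top (at_right 0)" and T0: "T0 > 0"
  shows "AE \<omega> in M.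
        ((\<lambda>lam. SUP t\<in>{0..T0}.
            \<bar>min (psi_S mu
                   (real (card {i \<in> {- int (mlam lam) .. int (mlam lam)}.
                              sr_count (\<lambda>k. Z i k \<omega>) (T_S mu * t) > 0})
                    / real (2 * mlam lam + 1)) / T_S mu) 1
             - min t 1\<bar>) \<longlongrightarrow> 0) (at_right 0)"
  using AE_emp_cdf_uniform AE_arrived_iff
proof eventually_elim
  case (elim \<omega>)
  have "real (card {i \<in> {- int m .. int m}. sr_count (\<lambda>k. Z i k \<omega>) (Tmax * t) > 0})
      / real (2 * m + 1) = emp_cdf m (Tmax * t) \<omega>" for m t
    unfolding emp_cdf_def sr_count_pos_iff using elim(2) by simp
  moreover have "eventually (\<lambda>lam. \<forall>s\<ge>0. \<bar>emp_cdf (mlam lam) s \<omega> - F s\<bar> < \<delta>) (at_right 0)"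
    if "\<delta> > 0" for \<delta>
    using filterlim_iff[THEN iffD1, OF mlam_lim] elim(1) that by blast
  ultimately show ?case
    unfolding T_S_eq using emp_cdf_range T0
    by (simp only:) (rule psi_scaled_uniform)
qed

end

theorem mainTheorem12:
  fixes mu :: "real measure"
    and M :: "'a measure"
    and Z :: "int \<Rightarrow> nat \<Rightarrow> 'a \<Rightarrow> real"
    and mlam :: "real \<Rightarrow> nat"
  assumes mu_prob: "prob_space mu"
    and mu_sets: "sets mu = sets borel"
    and mu_pos: "emeasure mu {..0} = 0"
    and mu_bdd: "\<exists>B. emeasure mu {B<..} = 0"
    and mlam_lim: "filterlim mlam at_top (at_right 0)"
    and M_prob: "prob_space M"
    and Z_indep: "prob_space.indep_vars M (\<lambda>_. borel) (\<lambda>(i, k). Z i k) UNIV"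
    and Z_first: "\<And>i. distr M borel (Z i 0) = nu_S mu"
    and Z_incr: "\<And>i k. distr M borel (Z i (Suc k)) = mu"
  shows
    "(\<forall>T>0. AE \<omega> in M.
        ((\<lambda>lam. SUP t\<in>{0..T}.
            \<bar>min (psi_S mu
                   (real (card {i \<in> {- int (mlam lam) .. int (mlam lam)}.
                              sr_count (\<lambda>k. Z i k \<omega>) (T_S mu * t) > 0})
                    / real (2 * mlam lam + 1)) / T_S mu) 1
             - min t 1\<bar>) \<longlongrightarrow> 0) (at_right 0))
     \<and> (\<forall>t\<ge>0. \<forall>k::nat.
        measure M {\<omega> \<in> space M.
            finite (Cblock (\<lambda>i. min (sr_count (\<lambda>j. Z i j \<omega>) (T_S mu * t)) 1) 0)
            \<and> card (Cblock (\<lambda>i. min (sr_count (\<lambda>j. Z i j \<omega>) (T_S mu * t)) 1) 0) = k}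
        = q_S mu k (min t 1))"
proof -
  interpret renewal_family mu M Z
    by (intro renewal_family.intro bounded_lifetime.intro renewal_family_axioms.intro) (fact assms)+
  show ?thesis
    using hydrodynamic_limit[OF mlam_lim] block_size_law by blast
qed

end
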